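(* Let $k\in\mathbb{Z}$. For all positive integers $x,n$, $$(-1)^{x-1}E_{n-1}^{(k)}(x)+E_{n-1}^{(k)}=\frac{2}{n}\sum_{m=1}^{n}\sum_{j=1}^{m}\sum_{i=0}^{x-1}(-1)^{i}i^{n-m}\binom{n}{m}\frac{S_{1}(m,j)}{j^{k-1}}.$$
   Context: Convention: $0^0=1$. For $k\in\mathbb{Z}$, $\mathrm{Ei}_k(x)=\sum_{n=1}^{\infty}\frac{x^n}{n^k(n-1)!}$. The poly-Genocchi polynomials $G_n^{(k)}(x)$ are defined by $\frac{2\,\mathrm{Ei}_k(\log(1+t))}{e^t+1}e^{xt}=\sum_{n=0}^{\infty}G_n^{(k)}(x)\frac{t^n}{n!}$; the poly-Euler polynomials are $E_n^{(k)}(x)=\frac{G_{n+1}^{(k)}(x)}{n+1}$ ($n\ge0$), and $E_n^{(k)}=E_n^{(k)}(0)$. $S_1(n,m)$ are the signed Stirling numbers of the first kind: $\frac{(\log(1+t))^m}{m!}=\sum_{n=m}^{\infty}S_1(n,m)\frac{t^n}{n!}$. *)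

theory Defs
  imports Complex_Main "HOL-Computational_Algebra.Formal_Power_Series"
begin

definition Ei_fps :: "int \<Rightarrow> real fps" where
  "Ei_fps k = Abs_fps (\<lambda>n. if n = 0 then 0 else 1 / (real n powi k * fact (n - 1)))"

text \<open>Generating function 2 Ei_k(log(1+t)) / (e^t + 1) * e^(x t).
  fps_ln 1 is the series of log(1+t).\<close>
definition polyGenocchi_gf :: "int \<Rightarrow> real \<Rightarrow> real fps" where
  "polyGenocchi_gf k x =
     fps_const 2 * fps_compose (Ei_fps k) (fps_ln 1) * inverse (fps_exp 1 + 1) * fps_exp x"

definition polyGenocchi :: "nat \<Rightarrow> int \<Rightarrow> real \<Rightarrow> real" where
  "polyGenocchi n k x = fact n * fps_nth (polyGenocchi_gf k x) n"

definition polyEuler :: "nat \<Rightarrow> int \<Rightarrow> real \<Rightarrow> real" where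
  "polyEuler n k x = polyGenocchi (n + 1) k x / real (n + 1)"

text \<open>Signed Stirling numbers of the first kind: (log(1+t))^m / m! = sum S1(n,m) t^n/n!.\<close>
definition stirling1s :: "nat \<Rightarrow> nat \<Rightarrow> real" where
  "stirling1s n m = fact n * fps_nth (fps_ln 1 ^ m) n / fact m"

end

(* Since (1 - (-1)^x e^(xt)) / (e^t + 1) = sum_{i<x} (-1)^i e^(it), the combination
   G^(k)(0) - (-1)^x G^(k)(x) of generating functions loses its denominator and becomes
   2 Ei_k(log(1+t)) sum_{i<x} (-1)^i e^(it). Both factors have explicit coefficients
   (the first through S_1(m,j)/j^(k-1), the second as power sums), so the identity is
   their Cauchy product. *)
theory Submission
  imports Defs
begin

unbundle fps_syntax

lemma fps_exp_alternating_sum_telescope: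
  "(fps_exp 1 + 1) * (\<Sum>i<x. fps_const ((-1) ^ i) * fps_exp (of_nat i))
     = 1 - fps_const ((-1) ^ x) * (fps_exp (of_nat x) :: 'a :: field_char_0 fps)"
proof (induction x)
  case 0
  then show ?case by simp
next
  case (Suc x)
  have "fps_exp (of_nat (Suc x)) = fps_exp 1 * (fps_exp (of_nat x) :: 'a fps)"
    by (simp add: fps_exp_add_mult)
  with Suc.IH show ?case
    by (simp add: algebra_simps flip: fps_const_neg)
qed

lemma fps_nth_alternating_exp_sum:
  "(\<Sum>i<x. fps_const ((-1) ^ i) * fps_exp (of_nat i)) $ r
     = (\<Sum>i<x. (-1) ^ i * of_nat i ^ r) / (fact r :: 'a :: field_char_0)"
  by (simp add: fps_sum_nth fps_exp_def sum_divide_distrib)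

lemma fps_nth_Ei_fps_compose_ln:
  "(Ei_fps k oo fps_ln 1) $ m = (\<Sum>j = 1..m. stirling1s m j / real j powi (k - 1)) / fact m"
proof -
  have "(Ei_fps k oo fps_ln 1) $ m = (\<Sum>j = 1..m. Ei_fps k $ j * (fps_ln 1 ^ j) $ m)"
    by (simp add: fps_compose_nth sum.atLeast_Suc_atMost Ei_fps_def atLeastSucAtMost_greaterThanAtMost)
  also have "\<dots> = (\<Sum>j = 1..m. stirling1s m j / real j powi (k - 1) / fact m)"
  proof (rule sum.cong)
    fix j assume "j \<in> {1..m}"
    then have j: "j \<ge> 1" by simp
    have "real j powi k = real j powi (k - 1) * real j"
      using power_int_add_1[of "real j" "k - 1"] j by simp
    moreover have "fact j = real j * fact (j - 1)"
      using fact_reduce[of j] j by simp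
    ultimately show "Ei_fps k $ j * (fps_ln 1 ^ j) $ m = stirling1s m j / real j powi (k - 1) / fact m"
      using j by (simp add: Ei_fps_def stirling1s_def field_simps)
  qed simp
  finally show ?thesis by (simp add: sum_divide_distrib)
qed

lemma polyGenocchi_gf_alternating:
  "polyGenocchi_gf k 0 - fps_const ((-1) ^ x) * polyGenocchi_gf k (real x)
     = fps_const 2 * (Ei_fps k oo fps_ln 1) * (\<Sum>i<x. fps_const ((-1) ^ i) * fps_exp (real i))"
proof -
  define E :: "real fps" where "E = fps_exp 1 + 1"
  have "polyGenocchi_gf k 0 - fps_const ((-1) ^ x) * polyGenocchi_gf k (real x)
      = fps_const 2 * (Ei_fps k oo fps_ln 1) * inverse E * (1 - fps_const ((-1) ^ x) * fps_exp (real x))"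
    by (simp add: polyGenocchi_gf_def E_def algebra_simps)
  also have "\<dots> = fps_const 2 * (Ei_fps k oo fps_ln 1) * (inverse E * E)
      * (\<Sum>i<x. fps_const ((-1) ^ i) * fps_exp (real i))"
    by (simp add: E_def fps_exp_alternating_sum_telescope[symmetric] mult.assoc)
  also have "inverse E * E = 1"
    by (simp add: E_def inverse_mult_eq_1)
  finally show ?thesis by simp
qed

lemma polyGenocchi_alternating:
  "polyGenocchi n k 0 - (-1) ^ x * polyGenocchi n k (real x)
     = 2 * (\<Sum>m = 1..n. real (n choose m) * (\<Sum>j = 1..m. stirling1s m j / real j powi (k - 1))
                          * (\<Sum>i<x. (-1) ^ i * real i ^ (n - m)))"
proof -
  define C where "C = Ei_fps k oo fps_ln 1"
  define S :: "real fps" where "S = (\<Sum>i<x. fps_const ((-1) ^ i) * fps_exp (real i))"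
  have "polyGenocchi n k 0 - (-1) ^ x * polyGenocchi n k (real x)
      = fact n * (polyGenocchi_gf k 0 - fps_const ((-1) ^ x) * polyGenocchi_gf k (real x)) $ n"
    by (simp add: polyGenocchi_def algebra_simps)
  also have "\<dots> = fact n * (fps_const 2 * (C * S)) $ n"
    by (simp add: polyGenocchi_gf_alternating[of k x, folded C_def S_def] mult.assoc)
  also have "\<dots> = 2 * (\<Sum>m = 0..n. fact n * C $ m * S $ (n - m))"
    unfolding fps_mult_left_const_nth by (simp add: fps_mult_nth sum_distrib_left algebra_simps)
  also have "\<dots> = 2 * (\<Sum>m = 1..n. real (n choose m) * (\<Sum>j = 1..m. stirling1s m j / real j powi (k - 1))
                          * (\<Sum>i<x. (-1) ^ i * real i ^ (n - m)))"
    by (simp add: sum.atLeast_Suc_atMost atLeastSucAtMost_greaterThanAtMost C_def S_def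
        fps_nth_Ei_fps_compose_ln fps_nth_alternating_exp_sum binomial_fact)
  finally show ?thesis .
qed

theorem corollary5:
  fixes k :: int and x n :: nat
  assumes "x > 0" and "n > 0"
  shows "(-1) ^ (x - 1) * polyEuler (n - 1) k (real x) + polyEuler (n - 1) k 0 =
    2 / real n * (\<Sum>m = 1..n. \<Sum>j = 1..m. \<Sum>i = 0..x - 1.
       (-1) ^ i * real i ^ (n - m) * real (n choose m) * stirling1s m j / (real j powi (k - 1)))"
proof -
  have sign: "(-1) ^ (x - 1) = - ((-1) ^ x :: real)"
    using assms(1) by (cases x) simp_all
  have "(-1) ^ (x - 1) * polyEuler (n - 1) k (real x) + polyEuler (n - 1) k 0
      = (polyGenocchi n k 0 - (-1) ^ x * polyGenocchi n k (real x)) / real n"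
    unfolding sign polyEuler_def using assms(2) by (simp add: diff_divide_distrib)
  also have "\<dots> = 2 / real n * (\<Sum>m = 1..n. real (n choose m)
      * (\<Sum>j = 1..m. stirling1s m j / real j powi (k - 1)) * (\<Sum>i<x. (-1) ^ i * real i ^ (n - m)))"
    by (simp add: polyGenocchi_alternating)
  also have "{..<x} = {0..x - 1}"
    using assms(1) by auto
  finally show ?thesis
    by (simp add: sum_product sum_distrib_left mult.commute mult.left_commute)
qed

end
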